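(* Let $c\ge 0$ and let $(f_p)_{p\ge1}$ be real numbers with $f_1=0$ and $$f_p\le c+\frac{1}{p(p-1)}\sum_{k=1}^{p-1}k f_k\quad\text{for all } p\ge 2.$$ Then $f_p\le 2c$ for all $p\ge 1$. *)

theory Defs
  imports Complex_Main
begin

end

theory Submission
  imports Defs
begin

text \<open>The weights \<open>k / (p (p - 1))\<close>, \<open>1 \<le> k < p\<close>, sum to \<open>1/2\<close>. Hence the recursion
  bounds \<open>f p\<close> by \<open>c\<close> plus half of any common bound on the earlier values, and the bound
  \<open>2 c\<close> reproduces itself under strong induction.\<close>

lemma weighted_sum_le_half_bound:
  fixes f :: "nat \<Rightarrow> real" and M :: real
  assumes "p \<ge> 2" and bound: "\<And>k. 1 \<le> k \<Longrightarrow> k < p \<Longrightarrow> f k \<le> M"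
  shows "(1 / (real p * (real p - 1))) * (\<Sum>k=1..p-1. real k * f k) \<le> M / 2"
proof -
  have pos: "real p * (real p - 1) > 0"
    using \<open>p \<ge> 2\<close> by simp
  have "(\<Sum>k=1..p-1. real k * f k) \<le> (\<Sum>k=1..p-1. real k * M)"
    by (rule sum_mono) (auto intro!: mult_left_mono bound)
  also have "\<dots> = M * (2 * (\<Sum>k=Suc 0..p-1. real k)) / 2"
    by (simp add: sum_distrib_left mult_ac)
  also have "\<dots> = M * (real p * (real p - 1)) / 2"
    using \<open>p \<ge> 2\<close> by (simp only: double_gauss_sum_from_Suc_0) (simp add: of_nat_diff)
  finally show ?thesis
    using pos by (simp add: divide_simps mult.commute)
qed

theorem lemma2p3:
  fixes c :: real and f :: "nat \<Rightarrow> real"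
  assumes "c \<ge> 0"
    and "f 1 = 0"
    and "\<And>p. p \<ge> 2 \<Longrightarrow>
           f p \<le> c + (1 / (real p * (real p - 1))) * (\<Sum>k=1..p-1. real k * f k)"
  shows "\<forall>p\<ge>1. f p \<le> 2 * c"
proof (intro allI impI)
  fix p :: nat
  assume "p \<ge> 1"
  then show "f p \<le> 2 * c"
  proof (induction p rule: less_induct)
    case (less p)
    show ?case
    proof (cases "p = 1")
      case True
      then show ?thesis using assms(1,2) by simp
    next
      case False
      then have "p \<ge> 2" using less.prems by simp
      have "(1 / (real p * (real p - 1))) * (\<Sum>k=1..p-1. real k * f k) \<le> 2 * c / 2"
        using \<open>p \<ge> 2\<close> by (rule weighted_sum_le_half_bound) (rule less.IH)
      then show ?thesis using assms(3)[OF \<open>p \<ge> 2\<close>] by simp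
    qed
  qed
qed

end
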